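(* Let $n\ge 1$, $0\le r\le n$ and let $a$ be an integer with $a\ge 1$, and $a\ge 2$ if $r\ge 1$. Then (i) $\dim_{\mathbb K}\left(R_n/\mathcal{I}_{n,0}^{\langle a\rangle}\right)=(a-1)^{n-1}(a+n-1)$; (ii) $\dim_{\mathbb K}\left(R_n/\mathcal{I}_{n,r}^{\langle a\rangle}\right)=\sum_{i=0}^r(-1)^i\binom{r}{i}\theta_{n-i}(a-1)$, where $\theta_l(x)=x^{l-1}(x+l)$ for $l\ge 1$ and $\theta_0(x)=1$.
   Context: $\mathbb K$ is a field and $R_m=\mathbb K[x_1,\ldots,x_m]$. For integers $m\ge 1$, $0\le s\le m$ and $a\ge1$ (with $a\ge 2$ when $s\ge1$), define the weight $\omega(i)=a$ if $1\le i\le m-s$ and $\omega(i)=a-1$ if $m-s<i\le m$, and the monomial ideal $\mathcal{I}_{m,s}^{\langle a\rangle}=\langle x_i^{\omega(i)},\ x_i^{\omega(i)-1}x_j^{\omega(j)-1} : i,j\in[m],\ i\ne j\rangle\subseteq R_m$. Here $0^0=1$. *)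

theory Defs
  imports Main "HOL-Library.Poly_Mapping"
begin

text \<open>Polynomials over a field 'k in variables indexed by nat, represented as finitely
supported maps from exponent vectors exponent vectors to coefficients.
Variable x_i is indexed by i.\<close>

type_synonym 'k mpoly = "(nat \<Rightarrow>\<^sub>0 nat) \<Rightarrow>\<^sub>0 'k"

definition mon :: "(nat \<Rightarrow>\<^sub>0 nat) \<Rightarrow> 'k::field mpoly" where
  "mon e = Poly_Mapping.single e 1"

definition xpow :: "nat \<Rightarrow> nat \<Rightarrow> 'k::field mpoly" where
  "xpow i k = mon (Poly_Mapping.single i k)"

definition Rpoly :: "nat \<Rightarrow> 'k::field mpoly set" where
  "Rpoly m = {p. \<forall>e \<in> Poly_Mapping.keys p. Poly_Mapping.keys e \<subseteq> {1..m}}"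

definition ideal_gen :: "nat \<Rightarrow> 'k::field mpoly set \<Rightarrow> 'k mpoly set" where
  "ideal_gen m G = {(\<Sum>g\<in>F. q g * g) | F q. finite F \<and> F \<subseteq> G \<and> (\<forall>g\<in>F. q g \<in> Rpoly m)}"

definition smul :: "'k::field \<Rightarrow> 'k mpoly \<Rightarrow> 'k mpoly" where
  "smul c p = Poly_Mapping.single 0 c * p"

definition indep_mod :: "nat \<Rightarrow> 'k::field mpoly set \<Rightarrow> 'k mpoly set \<Rightarrow> bool" where
  "indep_mod m I S \<longleftrightarrow> finite S \<and> S \<subseteq> Rpoly m \<and>
     (\<forall>c. (\<Sum>s\<in>S. smul (c s) s) \<in> I \<longrightarrow> (\<forall>s\<in>S. c s = 0))"

text \<open>dim_K (R_m / I) = d: the quotient is finite-dimensional of dimension d, i.e. the maximal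
size of a family in R_m that is linearly independent modulo I is exactly d.\<close>
definition quot_dim_eq :: "nat \<Rightarrow> 'k::field mpoly set \<Rightarrow> nat \<Rightarrow> bool" where
  "quot_dim_eq m I d \<longleftrightarrow> (\<exists>S. indep_mod m I S \<and> card S = d) \<and>
     (\<forall>S. indep_mod m I S \<longrightarrow> card S \<le> d)"

definition omega :: "nat \<Rightarrow> nat \<Rightarrow> nat \<Rightarrow> nat \<Rightarrow> nat" where
  "omega m s a i = (if 1 \<le> i \<and> i \<le> m - s then a else a - 1)"

definition Iideal :: "nat \<Rightarrow> nat \<Rightarrow> nat \<Rightarrow> 'k::field mpoly set" where
  "Iideal m s a = ideal_gen m
     ({xpow i (omega m s a i) | i. i \<in> {1..m}} \<union>
      {xpow i (omega m s a i - 1) * xpow j (omega m s a j - 1) | i j.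
         i \<in> {1..m} \<and> j \<in> {1..m} \<and> i \<noteq> j})"

definition theta :: "nat \<Rightarrow> int \<Rightarrow> int" where
  "theta l x = (if l = 0 then 1 else x ^ (l - 1) * (x + int l))"

end

theory Submission
  imports Defs "HOL-Library.FuncSet"
begin

text \<open>The ideal is generated by monomials, so the residues of the standard monomials (those
divisible by no generator) form a basis of the quotient. An exponent vector e is standard iff
e_i < \<omega>(i) for all i and e_i \<ge> \<omega>(i) - 1 for at most one i; the standard exponents are therefore the
box \<Prod>_j [0, \<omega>(j) - 2] together with, for each i, the slab where e_i = \<omega>(i) - 1, giving the count
\<Prod>_j (\<omega>(j) - 1) + \<Sum>_i \<Prod>_{j \<noteq> i} (\<omega>(j) - 1). With x = a - 1 this is
x^(n-r) (x-1)^r + (n-r) x^(n-r-1) (x-1)^r + r x^(n-r) (x-1)^(r-1), and the binomial theorem, together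
with its derivative in x, turns the alternating sum of the \<theta>_(n-i)(x) into the same expression.\<close>

lemma poly_mapping_sum_single_keys:
  "(p::'a \<Rightarrow>\<^sub>0 'b::comm_monoid_add) = (\<Sum>k\<in>Poly_Mapping.keys p. Poly_Mapping.single k (Poly_Mapping.lookup p k))"
  by (rule poly_mapping_eqI) (simp add: lookup_sum lookup_single when_def in_keys_iff)

lemma lookup_smul: "Poly_Mapping.lookup (smul c (p::'k::field mpoly)) k = c * Poly_Mapping.lookup p k"
  unfolding smul_def mult_map_scale_conv_mult[symmetric] by (simp add: map.rep_eq when_def)

lemma smul_mon: "smul c (mon e :: 'k::field mpoly) = Poly_Mapping.single e c"
  by (simp add: smul_def mon_def mult_single)

lemma mon_add: "mon (a + b) = (mon a * mon b :: 'k::field mpoly)"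
  by (simp add: mon_def mult_single)

lemma inj_mon: "inj (mon :: (nat \<Rightarrow>\<^sub>0 nat) \<Rightarrow> 'k::field mpoly)"
  by (rule injI) (metis lookup_single_eq lookup_single_not_eq mon_def one_neq_zero)

lemma Rpoly_sum: "(\<And>x. x \<in> A \<Longrightarrow> f x \<in> Rpoly m) \<Longrightarrow> sum f A \<in> Rpoly m"
  unfolding Rpoly_def using keys_sum[of f A] by blast

lemma Rpoly_smul: "p \<in> Rpoly m \<Longrightarrow> smul c p \<in> Rpoly m"
  unfolding Rpoly_def by (auto simp: in_keys_iff lookup_smul)

lemma ex_add_eq_iff_lookup_le:
  "(\<exists>d. (e::nat \<Rightarrow>\<^sub>0 nat) = d + g) \<longleftrightarrow> (\<forall>i. Poly_Mapping.lookup g i \<le> Poly_Mapping.lookup e i)"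
proof
  assume "\<forall>i. Poly_Mapping.lookup g i \<le> Poly_Mapping.lookup e i"
  then have "e = (e - g) + g"
    by (intro poly_mapping_eqI) (simp add: lookup_add lookup_minus)
  then show "\<exists>d. e = d + g" by blast
qed (auto simp: lookup_add)

lemma keys_add_nat:
  "Poly_Mapping.keys ((d::nat \<Rightarrow>\<^sub>0 nat) + g) = Poly_Mapping.keys d \<union> Poly_Mapping.keys g"
  by (auto simp: in_keys_iff lookup_add)

section \<open>Monomial ideals\<close>

lemma keys_mem_monomial_ideal:
  assumes "p \<in> ideal_gen m (mon ` E :: 'k::field mpoly set)" "k \<in> Poly_Mapping.keys p"
  shows "\<exists>g\<in>E. \<exists>d. k = d + g"
proof -
  obtain F q where p: "p = (\<Sum>h\<in>F. q h * h)" and F: "F \<subseteq> mon ` E"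
    using assms(1) unfolding ideal_gen_def by blast
  obtain h where h: "h \<in> F" "k \<in> Poly_Mapping.keys (q h * h)"
    using keys_sum[of "\<lambda>h. q h * h" F] assms(2) p by blast
  from h F obtain g where g: "g \<in> E" "h = mon g" by blast
  obtain d g' where "k = d + g'" "g' \<in> Poly_Mapping.keys (mon g :: 'k mpoly)"
    using keys_mult[of "q h" h] h(2) g(2) by blast
  then have "k = d + g" by (simp add: mon_def split: if_splits)
  with g show ?thesis by blast
qed

lemma mem_monomial_idealI:
  assumes "p \<in> Rpoly m"
    and divisible: "\<And>k. k \<in> Poly_Mapping.keys p \<Longrightarrow> \<exists>g\<in>E. \<exists>d. k = d + g"
  shows "p \<in> ideal_gen m (mon ` E :: 'k::field mpoly set)"
proof -
  from divisible have "\<forall>k\<in>Poly_Mapping.keys p. \<exists>gq. fst gq \<in> E \<and> k = snd gq + fst gq"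
    by fastforce
  then obtain gq where gq: "\<forall>k\<in>Poly_Mapping.keys p. fst (gq k) \<in> E \<and> k = snd (gq k) + fst (gq k)"
    by (rule bchoice[elim_format]) blast
  define gen where "gen = fst \<circ> gq"
  define quo where "quo = snd \<circ> gq"
  have gen: "gen k \<in> E \<and> k = quo k + gen k" if "k \<in> Poly_Mapping.keys p" for k
    using gq that by (simp add: gen_def quo_def)
  define F where "F = (\<lambda>k. mon (gen k) :: 'k mpoly) ` Poly_Mapping.keys p"
  define q where "q h = (\<Sum>k\<in>{k\<in>Poly_Mapping.keys p. mon (gen k) = h}.
      Poly_Mapping.single (quo k) (Poly_Mapping.lookup p k))" for h :: "'k mpoly"
  have "finite F" "F \<subseteq> mon ` E" using gen by (auto simp: F_def)
  moreover have "q h \<in> Rpoly m" for h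
    unfolding q_def
  proof (rule Rpoly_sum)
    fix k assume "k \<in> {k\<in>Poly_Mapping.keys p. mon (gen k) = h}"
    then have "Poly_Mapping.keys (quo k) \<subseteq> {1..m}"
      using assms(1) gen[of k] keys_add_nat[of "quo k" "gen k"] unfolding Rpoly_def by auto
    then show "Poly_Mapping.single (quo k) (Poly_Mapping.lookup p k) \<in> Rpoly m"
      unfolding Rpoly_def by simp
  qed
  moreover have "p = (\<Sum>h\<in>F. q h * h)"
  proof -
    have "(\<Sum>h\<in>F. q h * h) = (\<Sum>h\<in>F. \<Sum>k\<in>{k\<in>Poly_Mapping.keys p. mon (gen k) = h}.
        Poly_Mapping.single (quo k) (Poly_Mapping.lookup p k) * mon (gen k))"
      unfolding q_def sum_distrib_right by (rule sum.cong) simp_all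
    also have "\<dots> = (\<Sum>k\<in>Poly_Mapping.keys p. Poly_Mapping.single (quo k) (Poly_Mapping.lookup p k) * mon (gen k))"
      unfolding F_def by (rule sum.image_gen[symmetric]) simp
    also have "\<dots> = (\<Sum>k\<in>Poly_Mapping.keys p. Poly_Mapping.single k (Poly_Mapping.lookup p k))"
      by (rule sum.cong) (use gen in \<open>simp_all add: mon_def mult_single\<close>)
    finally show ?thesis using poly_mapping_sum_single_keys[of p] by simp
  qed
  ultimately show ?thesis unfolding ideal_gen_def by blast
qed

lemma nontrivial_relation_if_card_gt:
  fixes A :: "'t \<Rightarrow> 's \<Rightarrow> 'k::field"
  assumes "finite S" "finite T" "card T > card S"
  shows "\<exists>c. (\<exists>t\<in>T. c t \<noteq> 0) \<and> (\<forall>s\<in>S. (\<Sum>t\<in>T. c t * A t s) = 0)"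
  using assms
proof (induction S arbitrary: T A rule: finite_induct)
  case empty
  then obtain t0 where "t0 \<in> T" by fastforce
  then show ?case by (intro exI[of _ "\<lambda>_. 1"]) auto
next
  case (insert s0 S T A)
  show ?case
  proof (cases "\<forall>t\<in>T. A t s0 = 0")
    case True
    have "card T > card S" using insert by simp
    from insert.IH[OF insert.prems(1) this] obtain c where
      "\<exists>t\<in>T. c t \<noteq> 0" "\<forall>s\<in>S. (\<Sum>t\<in>T. c t * A t s) = 0" by blast
    with True show ?thesis by (intro exI[of _ c]) auto
  next
    case False
    then obtain t0 where t0: "t0 \<in> T" "A t0 s0 \<noteq> 0" by blast
    \<comment> \<open>Gaussian elimination: clear column s0 using row t0 and recurse on the remaining rows.\<close>
    define B where "B t s = A t s - (A t s0 / A t0 s0) * A t0 s" for t s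
    have "finite (T - {t0})" "card (T - {t0}) > card S" using insert t0 by auto
    from insert.IH[OF this] obtain c where
      c: "\<exists>t\<in>T - {t0}. c t \<noteq> 0" "\<forall>s\<in>S. (\<Sum>t\<in>T - {t0}. c t * B t s) = 0" by blast
    define c' where "c' t = (if t = t0 then - (\<Sum>t\<in>T - {t0}. c t * A t s0) / A t0 s0 else c t)" for t
    have reduce: "(\<Sum>t\<in>T. c' t * A t s) = (\<Sum>t\<in>T - {t0}. c t * B t s)" for s
    proof -
      have "(\<Sum>t\<in>T. c' t * A t s) = c' t0 * A t0 s + (\<Sum>t\<in>T - {t0}. c t * A t s)"
        using t0 insert.prems(1) by (simp add: sum.remove c'_def)
      also have "c' t0 * A t0 s = - (\<Sum>t\<in>T - {t0}. c t * (A t s0 / A t0 s0) * A t0 s)"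
        by (simp add: c'_def sum_distrib_right sum_negf[symmetric] sum_divide_distrib)
      finally show ?thesis
        by (simp add: B_def right_diff_distrib sum_subtractf algebra_simps)
    qed
    have "\<exists>t\<in>T. c' t \<noteq> 0" using c(1) by (auto simp: c'_def)
    moreover have "(\<Sum>t\<in>T. c' t * A t s) = 0" if "s \<in> insert s0 S" for s
      using that t0(2) c(2) by (auto simp: reduce B_def)
    ultimately show ?thesis by blast
  qed
qed

definition standard_exps :: "nat \<Rightarrow> (nat \<Rightarrow>\<^sub>0 nat) set \<Rightarrow> (nat \<Rightarrow>\<^sub>0 nat) set" where
  "standard_exps m E = {e. Poly_Mapping.keys e \<subseteq> {1..m} \<and> \<not> (\<exists>g\<in>E. \<exists>d. e = d + g)}"

lemma indep_mod_standard_monomials: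
  assumes "finite (standard_exps m E)"
  shows "indep_mod m (ideal_gen m (mon ` E)) (mon ` standard_exps m E :: 'k::field mpoly set)"
    (is "indep_mod _ _ (mon ` ?N)")
  unfolding indep_mod_def
proof (intro conjI allI impI ballI)
  show "finite (mon ` ?N :: 'k mpoly set)" using assms by simp
  show "(mon ` ?N :: 'k mpoly set) \<subseteq> Rpoly m"
    by (auto simp: Rpoly_def mon_def standard_exps_def)
next
  fix c :: "'k mpoly \<Rightarrow> 'k" and s :: "'k mpoly"
  assume comb: "(\<Sum>s\<in>mon ` ?N. smul (c s) s) \<in> ideal_gen m (mon ` E)" and "s \<in> mon ` ?N"
  then obtain e where e: "e \<in> ?N" "s = mon e" by blast
  have "(\<Sum>s\<in>mon ` ?N. smul (c s) s) = (\<Sum>e\<in>?N. Poly_Mapping.single e (c (mon e :: 'k mpoly)))"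
    by (simp add: sum.reindex[OF inj_on_subset[OF inj_mon subset_UNIV]] smul_mon)
  moreover have "Poly_Mapping.lookup (\<Sum>e\<in>?N. Poly_Mapping.single e (c (mon e :: 'k mpoly))) e = c s"
    using e assms by (simp add: lookup_sum lookup_single when_def)
  ultimately show "c s = 0"
    using keys_mem_monomial_ideal[OF comb, of e] e(1) by (auto simp: in_keys_iff standard_exps_def)
qed

lemma card_indep_mod_monomial_ideal_le:
  assumes fin: "finite (standard_exps m E)"
    and T: "indep_mod m (ideal_gen m (mon ` E)) (T :: 'k::field mpoly set)"
  shows "card T \<le> card (standard_exps m E)"
proof (rule ccontr)
  let ?N = "standard_exps m E"
  assume "\<not> card T \<le> card ?N"
  \<comment> \<open>The coefficients of more than card N polynomials at the standard exponents are linearly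
      dependent; the corresponding combination has only non-standard monomials, so lies in the ideal.\<close>
  moreover have T_fin: "finite T" "T \<subseteq> Rpoly m" using T unfolding indep_mod_def by auto
  ultimately obtain c where c: "\<exists>t\<in>T. c t \<noteq> 0"
      and vanish: "\<forall>e\<in>?N. (\<Sum>t\<in>T. c t * Poly_Mapping.lookup t e) = 0"
    using nontrivial_relation_if_card_gt[OF fin, of T "\<lambda>t e. Poly_Mapping.lookup t e"] by auto
  let ?q = "\<Sum>t\<in>T. smul (c t) t"
  have q_R: "?q \<in> Rpoly m" using T_fin by (intro Rpoly_sum Rpoly_smul) auto
  have "?q \<in> ideal_gen m (mon ` E)"
  proof (rule mem_monomial_idealI[OF q_R])
    fix k assume k: "k \<in> Poly_Mapping.keys ?q"
    then have "k \<notin> ?N" using vanish by (auto simp: in_keys_iff lookup_sum lookup_smul)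
    moreover have "Poly_Mapping.keys k \<subseteq> {1..m}" using q_R k unfolding Rpoly_def by blast
    ultimately show "\<exists>g\<in>E. \<exists>d. k = d + g" unfolding standard_exps_def by blast
  qed
  then show False using T c unfolding indep_mod_def by blast
qed

lemma quot_dim_monomial_ideal:
  assumes "finite (standard_exps m E)"
  shows "quot_dim_eq m (ideal_gen m (mon ` E) :: 'k::field mpoly set) (card (standard_exps m E))"
  unfolding quot_dim_eq_def
proof (intro conjI allI impI exI)
  show "indep_mod m (ideal_gen m (mon ` E)) (mon ` standard_exps m E :: 'k mpoly set)"
    using assms by (rule indep_mod_standard_monomials)
  show "card (mon ` standard_exps m E :: 'k mpoly set) = card (standard_exps m E)"
    by (rule card_image[OF inj_on_subset[OF inj_mon subset_UNIV]])
qed (use assms card_indep_mod_monomial_ideal_le in blast)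

section \<open>Standard exponents of the weighted ideal\<close>

definition exp_box :: "nat set \<Rightarrow> (nat \<Rightarrow> nat set) \<Rightarrow> (nat \<Rightarrow>\<^sub>0 nat) set" where
  "exp_box D X = {e. Poly_Mapping.keys e \<subseteq> D \<and> (\<forall>i\<in>D. Poly_Mapping.lookup e i \<in> X i)}"

lemma bij_betw_exp_box_PiE:
  assumes "finite D"
  shows "bij_betw (\<lambda>e. restrict (Poly_Mapping.lookup e) D) (exp_box D X) (PiE D X)"
  unfolding bij_betw_def
proof
  show "inj_on (\<lambda>e. restrict (Poly_Mapping.lookup e) D) (exp_box D X)"
  proof (rule inj_onI, rule poly_mapping_eqI)
    fix e e' k
    assume box: "e \<in> exp_box D X" "e' \<in> exp_box D X"
      and eq: "restrict (Poly_Mapping.lookup e) D = restrict (Poly_Mapping.lookup e') D"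
    show "Poly_Mapping.lookup e k = Poly_Mapping.lookup e' k"
    proof (cases "k \<in> D")
      case False
      then have "k \<notin> Poly_Mapping.keys e" "k \<notin> Poly_Mapping.keys e'"
        using box unfolding exp_box_def by auto
      then show ?thesis by (simp add: in_keys_iff)
    qed (use fun_cong[OF eq, of k] in simp)
  qed
  have "f \<in> (\<lambda>e. restrict (Poly_Mapping.lookup e) D) ` exp_box D X" if f: "f \<in> PiE D X" for f
  proof -
    have fin: "finite {i. (if i \<in> D then f i else 0) \<noteq> 0}"
      using assms by (rule finite_subset[rotated]) auto
    define e where "e = Abs_poly_mapping (\<lambda>i. if i \<in> D then f i else 0)"
    have "e \<in> exp_box D X" "restrict (Poly_Mapping.lookup e) D = f"
      using f fin by (auto simp: e_def exp_box_def in_keys_iff PiE_def extensional_def split: if_splits)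
    then show ?thesis by blast
  qed
  then show "(\<lambda>e. restrict (Poly_Mapping.lookup e) D) ` exp_box D X = PiE D X"
    by (auto simp: exp_box_def)
qed

lemma card_exp_box: "finite D \<Longrightarrow> card (exp_box D X) = (\<Prod>i\<in>D. card (X i))"
  using bij_betw_exp_box_PiE[of D X] by (simp add: bij_betw_same_card card_PiE)

lemma finite_exp_box: "finite D \<Longrightarrow> (\<And>i. i \<in> D \<Longrightarrow> finite (X i)) \<Longrightarrow> finite (exp_box D X)"
  using bij_betw_exp_box_PiE[of D X] bij_betw_finite finite_PiE by blast

definition weight_gen_exps :: "(nat \<Rightarrow> nat) \<Rightarrow> nat \<Rightarrow> (nat \<Rightarrow>\<^sub>0 nat) set" where
  "weight_gen_exps w m = {Poly_Mapping.single i (w i) | i. i \<in> {1..m}} \<union>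
     {Poly_Mapping.single i (w i - 1) + Poly_Mapping.single j (w j - 1) | i j.
        i \<in> {1..m} \<and> j \<in> {1..m} \<and> i \<noteq> j}"

lemma Iideal_eq_monomial_ideal:
  "(Iideal m s a :: 'k::field mpoly set) = ideal_gen m (mon ` weight_gen_exps (omega m s a) m)"
proof -
  have "({xpow i (omega m s a i) | i. i \<in> {1..m}} \<union>
      {xpow i (omega m s a i - 1) * xpow j (omega m s a j - 1) | i j.
         i \<in> {1..m} \<and> j \<in> {1..m} \<and> i \<noteq> j} :: 'k mpoly set) = mon ` weight_gen_exps (omega m s a) m"
    unfolding weight_gen_exps_def xpow_def mon_add[symmetric] by blast
  then show ?thesis unfolding Iideal_def by simp
qed

lemma mem_standard_weight_gen_exps_iff:
  "e \<in> standard_exps m (weight_gen_exps w m) \<longleftrightarrow>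
     Poly_Mapping.keys e \<subseteq> {1..m} \<and> (\<forall>i\<in>{1..m}. Poly_Mapping.lookup e i < w i) \<and>
     (\<forall>i\<in>{1..m}. \<forall>j\<in>{1..m}.
        w i - 1 \<le> Poly_Mapping.lookup e i \<and> w j - 1 \<le> Poly_Mapping.lookup e j \<longrightarrow> i = j)"
proof -
  have single: "(\<exists>d. e = d + Poly_Mapping.single i k) \<longleftrightarrow> k \<le> Poly_Mapping.lookup e i" for i k
    unfolding ex_add_eq_iff_lookup_le by (auto simp: lookup_single when_def)
  have double: "(\<exists>d. e = d + (Poly_Mapping.single i k + Poly_Mapping.single j l)) \<longleftrightarrow>
      k \<le> Poly_Mapping.lookup e i \<and> l \<le> Poly_Mapping.lookup e j" if "i \<noteq> j" for i j k l
    unfolding ex_add_eq_iff_lookup_le using that by (auto simp: lookup_single lookup_add when_def)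
  have "(\<exists>g\<in>weight_gen_exps w m. \<exists>d. e = d + g) \<longleftrightarrow>
      (\<exists>i\<in>{1..m}. w i \<le> Poly_Mapping.lookup e i) \<or>
      (\<exists>i\<in>{1..m}. \<exists>j\<in>{1..m}. i \<noteq> j \<and>
         w i - 1 \<le> Poly_Mapping.lookup e i \<and> w j - 1 \<le> Poly_Mapping.lookup e j)"
    (is "?div \<longleftrightarrow> ?one \<or> ?two")
  proof
    assume ?div
    then obtain g where "g \<in> weight_gen_exps w m" "\<exists>d. e = d + g" by blast
    then consider i where "i \<in> {1..m}" "\<exists>d. e = d + Poly_Mapping.single i (w i)"
      | i j where "i \<in> {1..m}" "j \<in> {1..m}" "i \<noteq> j"
          "\<exists>d. e = d + (Poly_Mapping.single i (w i - 1) + Poly_Mapping.single j (w j - 1))"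
      unfolding weight_gen_exps_def by blast
    then show "?one \<or> ?two" by cases (use single double in blast)+
  next
    assume "?one \<or> ?two"
    then show ?div
    proof
      assume ?one
      then obtain i where "i \<in> {1..m}" "\<exists>d. e = d + Poly_Mapping.single i (w i)"
        using single by blast
      then show ?div unfolding weight_gen_exps_def by blast
    next
      assume ?two
      then obtain i j where "i \<in> {1..m}" "j \<in> {1..m}" "i \<noteq> j"
          "\<exists>d. e = d + (Poly_Mapping.single i (w i - 1) + Poly_Mapping.single j (w j - 1))"
        using double by blast
      then show ?div unfolding weight_gen_exps_def by blast
    qed
  qed
  then show ?thesis
    unfolding standard_exps_def mem_Collect_eq not_le[symmetric] by blast
qed

lemma standard_weight_gen_exps_eq_boxes:
  assumes "\<forall>i\<in>{1..m}. w i \<ge> 1"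
  shows "standard_exps m (weight_gen_exps w m) = exp_box {1..m} (\<lambda>j. {..<w j - 1}) \<union>
     (\<Union>i\<in>{1..m}. exp_box {1..m} (\<lambda>j. if j = i then {w i - 1} else {..<w j - 1}))"
    (is "_ = ?core \<union> (\<Union>i\<in>{1..m}. ?slab i)")
proof (intro set_eqI iffI)
  fix e assume "e \<in> standard_exps m (weight_gen_exps w m)"
  then have keys: "Poly_Mapping.keys e \<subseteq> {1..m}"
    and below: "\<forall>i\<in>{1..m}. Poly_Mapping.lookup e i < w i"
    and unique: "\<forall>i\<in>{1..m}. \<forall>j\<in>{1..m}.
        w i - 1 \<le> Poly_Mapping.lookup e i \<and> w j - 1 \<le> Poly_Mapping.lookup e j \<longrightarrow> i = j"
    unfolding mem_standard_weight_gen_exps_iff by blast+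
  show "e \<in> ?core \<union> (\<Union>i\<in>{1..m}. ?slab i)"
  proof (cases "\<exists>i\<in>{1..m}. w i - 1 \<le> Poly_Mapping.lookup e i")
    case True
    then obtain i where i: "i \<in> {1..m}" "w i - 1 \<le> Poly_Mapping.lookup e i" by blast
    have "Poly_Mapping.lookup e j \<in> (if j = i then {w i - 1} else {..<w j - 1})"
      if "j \<in> {1..m}" for j
      using below[rule_format, OF that] unique[rule_format, OF i(1) that] i(2)
      by (cases "j = i") (auto simp: not_le[symmetric])
    with keys have "e \<in> ?slab i" unfolding exp_box_def by blast
    with i show ?thesis by blast
  next
    case False
    then have "e \<in> ?core" unfolding exp_box_def using keys by (simp add: not_le)
    then show ?thesis by blast
  qed
next
  fix e assume "e \<in> ?core \<union> (\<Union>i\<in>{1..m}. ?slab i)"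
  then consider "e \<in> ?core" | i where "i \<in> {1..m}" "e \<in> ?slab i" by blast
  then show "e \<in> standard_exps m (weight_gen_exps w m)"
  proof cases
    case 1
    then show ?thesis
      unfolding mem_standard_weight_gen_exps_iff exp_box_def by fastforce
  next
    case (2 i)
    then have "Poly_Mapping.keys e \<subseteq> {1..m}"
      and lookup: "\<And>j. j \<in> {1..m} \<Longrightarrow>
        Poly_Mapping.lookup e j \<in> (if j = i then {w i - 1} else {..<w j - 1})"
      unfolding exp_box_def by blast+
    moreover have "Poly_Mapping.lookup e j < w j" if "j \<in> {1..m}" for j
      using lookup[OF that] assms[rule_format, OF that] by (auto split: if_splits)
    moreover have "j = k" if "j \<in> {1..m}" "k \<in> {1..m}"
        "w j - 1 \<le> Poly_Mapping.lookup e j" "w k - 1 \<le> Poly_Mapping.lookup e k" for j k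
      using lookup[OF that(1)] lookup[OF that(2)] that(3,4) by (auto split: if_splits)
    ultimately show ?thesis
      unfolding mem_standard_weight_gen_exps_iff by blast
  qed
qed

lemma
  assumes "\<forall>i\<in>{1..m}. w i \<ge> 1"
  shows finite_standard_weight_gen_exps: "finite (standard_exps m (weight_gen_exps w m))"
    and card_standard_weight_gen_exps: "card (standard_exps m (weight_gen_exps w m)) =
      (\<Prod>j\<in>{1..m}. w j - 1) + (\<Sum>i\<in>{1..m}. \<Prod>j\<in>{1..m} - {i}. w j - 1)"
proof -
  let ?core = "exp_box {1..m} (\<lambda>j. {..<w j - 1})"
  let ?slab = "\<lambda>i. exp_box {1..m} (\<lambda>j. if j = i then {w i - 1} else {..<w j - 1})"
  have fin_core: "finite ?core" and fin_slab: "finite (?slab i)" for i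
    by (auto intro: finite_exp_box)
  have card_slab: "card (?slab i) = (\<Prod>j\<in>{1..m} - {i}. w j - 1)" if "i \<in> {1..m}" for i
  proof -
    have "card (?slab i) = (\<Prod>j\<in>{1..m}. if j = i then 1 else w j - 1)"
      unfolding card_exp_box[OF finite_atLeastAtMost] by (rule prod.cong) auto
    also have "\<dots> = (\<Prod>j\<in>{1..m} - {i}. w j - 1)"
      using that by (simp add: prod.remove)
    finally show ?thesis .
  qed
  have lookup_slab: "Poly_Mapping.lookup e j \<in> (if j = i then {w i - 1} else {..<w j - 1})"
    if "e \<in> ?slab i" "j \<in> {1..m}" for e i j
    using that by (simp add: exp_box_def)
  have lookup_core: "Poly_Mapping.lookup e j < w j - 1" if "e \<in> ?core" "j \<in> {1..m}" for e j
    using that by (simp add: exp_box_def)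
  have "?slab i \<inter> ?slab i' = {}" if "i \<in> {1..m}" "i \<noteq> i'" for i i'
    using that lookup_slab[of _ i i] lookup_slab[of _ i' i] by fastforce
  then have card_slabs: "card (\<Union>i\<in>{1..m}. ?slab i) = (\<Sum>i\<in>{1..m}. \<Prod>j\<in>{1..m} - {i}. w j - 1)"
    by (subst card_UN_disjoint) (use fin_slab card_slab in auto)
  have "?core \<inter> ?slab i = {}" if "i \<in> {1..m}" for i
    using that lookup_slab[of _ i i] lookup_core[of _ i] by fastforce
  then have disjoint: "?core \<inter> (\<Union>i\<in>{1..m}. ?slab i) = {}" by blast
  have fin_slabs: "finite (\<Union>i\<in>{1..m}. ?slab i)" using fin_slab by blast
  note boxes = standard_weight_gen_exps_eq_boxes[OF assms]
  show "finite (standard_exps m (weight_gen_exps w m))"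
    unfolding boxes using fin_core fin_slabs by blast
  show "card (standard_exps m (weight_gen_exps w m)) =
      (\<Prod>j\<in>{1..m}. w j - 1) + (\<Sum>i\<in>{1..m}. \<Prod>j\<in>{1..m} - {i}. w j - 1)"
    unfolding boxes card_Un_disjoint[OF fin_core fin_slabs disjoint] card_slabs
    by (simp add: card_exp_box)
qed

section \<open>The dimension formula\<close>

lemma prod_omega_minus_one:
  assumes "finite T"
  shows "(\<Prod>j\<in>T. omega n s a j - 1) =
    (a - 1) ^ card (T \<inter> {1..n-s}) * (a - 2) ^ card (T - {1..n-s})"
proof -
  have "(\<Prod>j\<in>T. omega n s a j - 1) =
      (\<Prod>j\<in>T \<inter> {1..n-s}. omega n s a j - 1) * (\<Prod>j\<in>T - {1..n-s}. omega n s a j - 1)"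
    by (rule prod.Int_Diff[OF assms])
  also have "\<dots> = (\<Prod>j\<in>T \<inter> {1..n-s}. a - 1) * (\<Prod>j\<in>T - {1..n-s}. a - 2)"
    by (intro arg_cong2[where f = "(*)"] prod.cong) (auto simp: omega_def)
  finally show ?thesis by simp
qed

lemma sum_prod_omega_minus_one:
  assumes "s \<le> n"
  shows "(\<Prod>j\<in>{1..n}. omega n s a j - 1) + (\<Sum>i\<in>{1..n}. \<Prod>j\<in>{1..n} - {i}. omega n s a j - 1) =
    (a-1)^(n-s) * (a-2)^s + (n-s) * ((a-1)^(n-s-1) * (a-2)^s) + s * ((a-1)^(n-s) * (a-2)^(s-1))"
proof -
  have upper: "{1..n} - {1..n-s} = {n-s+1..n}" by auto
  have card_upper: "card ({1..n} - {1..n-s}) = s" unfolding upper using assms by simp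
  have lower_i: "(\<Prod>j\<in>{1..n} - {i}. omega n s a j - 1) = (a-1)^(n-s-1) * (a-2)^s"
    if "i \<in> {1..n-s}" for i
  proof -
    have "({1..n} - {i}) \<inter> {1..n-s} = {1..n-s} - {i}" "({1..n} - {i}) - {1..n-s} = {1..n} - {1..n-s}"
      using that by auto
    with that card_upper show ?thesis using prod_omega_minus_one[of "{1..n} - {i}" n s a] by simp
  qed
  have upper_i: "(\<Prod>j\<in>{1..n} - {i}. omega n s a j - 1) = (a-1)^(n-s) * (a-2)^(s-1)"
    if "i \<in> {1..n} - {1..n-s}" for i
  proof -
    have "({1..n} - {i}) \<inter> {1..n-s} = {1..n-s}" "({1..n} - {i}) - {1..n-s} = ({1..n} - {1..n-s}) - {i}"
      using that by auto
    with that card_upper show ?thesis using prod_omega_minus_one[of "{1..n} - {i}" n s a] by simp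
  qed
  have "(\<Sum>i\<in>{1..n}. \<Prod>j\<in>{1..n} - {i}. omega n s a j - 1) =
      (\<Sum>i\<in>{1..n-s}. \<Prod>j\<in>{1..n} - {i}. omega n s a j - 1) +
      (\<Sum>i\<in>{1..n} - {1..n-s}. \<Prod>j\<in>{1..n} - {i}. omega n s a j - 1)"
    using sum.Int_Diff[of "{1..n}" _ "{1..n-s}"] by (simp add: Int_absorb1)
  also have "\<dots> = (\<Sum>i\<in>{1..n-s}. (a-1)^(n-s-1) * (a-2)^s) +
      (\<Sum>i\<in>{1..n} - {1..n-s}. (a-1)^(n-s) * (a-2)^(s-1))"
    using lower_i upper_i by (intro arg_cong2[where f = "(+)"] sum.cong) auto
  finally have "(\<Sum>i\<in>{1..n}. \<Prod>j\<in>{1..n} - {i}. omega n s a j - 1) =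
      (n-s) * ((a-1)^(n-s-1) * (a-2)^s) + s * ((a-1)^(n-s) * (a-2)^(s-1))"
    using card_upper by simp
  moreover have "(\<Prod>j\<in>{1..n}. omega n s a j - 1) = (a-1)^(n-s) * (a-2)^s"
    using card_upper prod_omega_minus_one[of "{1..n}" n s a] by (simp add: Int_absorb1)
  ultimately show ?thesis using card_upper by simp
qed

lemma alternating_binomial_sum_power:
  fixes x :: int
  assumes "r \<le> n"
  shows "(\<Sum>i=0..r. (-1)^i * int (r choose i) * x^(n-i)) = x^(n-r) * (x-1)^r"
proof -
  have "x^(n-r) * (x-1)^r = x^(n-r) * (\<Sum>k\<le>r. of_nat (r choose k) * (-1)^k * x^(r-k))"
    using binomial_ring[of "-1" x r] by simp
  also have "\<dots> = (\<Sum>k\<le>r. (-1)^k * int (r choose k) * x^(n-k))"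
    unfolding sum_distrib_left
  proof (rule sum.cong)
    fix k assume "k \<in> {..r}"
    then have "n - r + (r - k) = n - k" using assms by simp
    then show "x^(n-r) * (of_nat (r choose k) * (-1)^k * x^(r-k)) = (-1)^k * int (r choose k) * x^(n-k)"
      by (simp add: power_add[symmetric])
  qed simp
  finally show ?thesis by (simp add: atLeast0AtMost)
qed

lemma alternating_binomial_sum_power_deriv:
  fixes x :: int
  assumes "r \<le> n"
  shows "(\<Sum>i=0..r. (-1)^i * int (r choose i) * (int (n-i) * x^(n-i-1))) =
    int (n-r) * (x^(n-r-1) * (x-1)^r) + int r * (x^(n-r) * (x-1)^(r-1))"
proof -
  \<comment> \<open>Split n - i = (n - r) + (r - i) and absorb r - i into the binomial coefficient.\<close>
  have "(\<Sum>i=0..r. (-1)^i * int (r choose i) * (int (n-i) * x^(n-i-1))) =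
      int (n-r) * (\<Sum>i=0..r. (-1)^i * int (r choose i) * x^(n-1-i)) +
      (\<Sum>i=0..r. (-1)^i * int ((r - i) * (r choose i)) * x^(n-1-i))"
    unfolding sum_distrib_left sum.distrib[symmetric]
  proof (rule sum.cong)
    fix i assume "i \<in> {0..r}"
    then have split: "int (n - i) = int (n-r) + int (r-i)" "n - i - 1 = n - 1 - i"
      using assms by auto
    show "(-1)^i * int (r choose i) * (int (n-i) * x^(n-i-1)) =
        int (n-r) * ((-1)^i * int (r choose i) * x^(n-1-i)) +
        (-1)^i * int ((r - i) * (r choose i)) * x^(n-1-i)"
      unfolding split of_nat_mult by (simp only: algebra_simps)
  qed simp
  moreover have "int (n-r) * (\<Sum>i=0..r. (-1)^i * int (r choose i) * x^(n-1-i)) =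
      int (n-r) * (x^(n-r-1) * (x-1)^r)"
  proof (cases "n = r")
    case False
    then show ?thesis
      using alternating_binomial_sum_power[of r "n - 1" x] assms by (simp add: diff_commute)
  qed simp
  moreover have "(\<Sum>i=0..r. (-1)^i * int ((r - i) * (r choose i)) * x^(n-1-i)) =
      int r * (x^(n-r) * (x-1)^(r-1))"
  proof (cases r)
    case (Suc r')
    have "(\<Sum>i=0..r. (-1)^i * int ((r - i) * (r choose i)) * x^(n-1-i)) =
        int r * (\<Sum>i=0..r. (-1)^i * int (r' choose i) * x^(n-1-i))"
      unfolding binomial_absorb_comp sum_distrib_left using Suc
      by (intro sum.cong) (simp_all add: algebra_simps)
    also have "(\<Sum>i=0..r. (-1)^i * int (r' choose i) * x^(n-1-i)) =
        (\<Sum>i=0..r'. (-1)^i * int (r' choose i) * x^(n-1-i))"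
      using Suc by simp
    also have "(\<Sum>i=0..r'. (-1)^i * int (r' choose i) * x^(n-1-i)) = x^(n-1-r') * (x-1)^r'"
      by (rule alternating_binomial_sum_power) (use Suc assms in simp)
    finally show ?thesis using Suc by simp
  qed simp
  ultimately show ?thesis by simp
qed

lemma theta_eq: "theta l x = x^l + int l * x^(l-1)"
  by (cases l) (simp_all add: theta_def algebra_simps)

lemma alternating_binomial_sum_theta:
  fixes x :: int
  assumes "r \<le> n"
  shows "(\<Sum>i=0..r. (-1)^i * int (r choose i) * theta (n-i) x) =
    x^(n-r) * (x-1)^r + int (n-r) * (x^(n-r-1) * (x-1)^r) + int r * (x^(n-r) * (x-1)^(r-1))"
proof -
  have "(\<Sum>i=0..r. (-1)^i * int (r choose i) * theta (n-i) x) =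
      (\<Sum>i=0..r. (-1)^i * int (r choose i) * x^(n-i)) +
      (\<Sum>i=0..r. (-1)^i * int (r choose i) * (int (n-i) * x^(n-i-1)))"
    unfolding sum.distrib[symmetric] theta_eq by (rule sum.cong) (simp_all add: algebra_simps)
  then show ?thesis
    using alternating_binomial_sum_power[OF assms] alternating_binomial_sum_power_deriv[OF assms]
    by simp
qed

lemma quot_dim_Iideal:
  assumes "s \<le> n" "a \<ge> 1" "s \<ge> 1 \<Longrightarrow> a \<ge> 2"
  shows "quot_dim_eq n (Iideal n s a :: 'k::field mpoly set)
    ((a-1)^(n-s) * (a-2)^s + (n-s) * ((a-1)^(n-s-1) * (a-2)^s) + s * ((a-1)^(n-s) * (a-2)^(s-1)))"
proof -
  have "omega n s a i \<ge> 1" if "i \<in> {1..n}" for i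
  proof (cases "i \<le> n - s")
    case False
    with that have "s \<ge> 1" by auto
    with False assms(3) show ?thesis by (simp add: omega_def)
  qed (use assms(2) that in \<open>simp add: omega_def\<close>)
  then have "finite (standard_exps n (weight_gen_exps (omega n s a) n))"
    and "card (standard_exps n (weight_gen_exps (omega n s a) n)) =
      (\<Prod>j\<in>{1..n}. omega n s a j - 1) + (\<Sum>i\<in>{1..n}. \<Prod>j\<in>{1..n} - {i}. omega n s a j - 1)"
    by (simp_all add: finite_standard_weight_gen_exps card_standard_weight_gen_exps)
  then show ?thesis
    unfolding Iideal_eq_monomial_ideal sum_prod_omega_minus_one[OF assms(1), symmetric]
    by (metis quot_dim_monomial_ideal)
qed

theorem lemma2:
  fixes n r a :: nat
  assumes "n \<ge> 1" and "r \<le> n" and "a \<ge> 1" and "r \<ge> 1 \<Longrightarrow> a \<ge> 2"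
  shows "quot_dim_eq n (Iideal n 0 a :: 'k::field mpoly set) ((a - 1) ^ (n - 1) * (a + n - 1)) \<and>
         (\<exists>d. quot_dim_eq n (Iideal n r a :: 'k::field mpoly set) d \<and>
           int d = (\<Sum>i=0..r. (-1) ^ i * int (r choose i) * theta (n - i) (int a - 1)))"
proof
  have "(a-1)^n + n * (a-1)^(n-1) = (a - 1) ^ (n - 1) * (a + n - 1)"
    using assms(1,3) by (cases n; cases a) (simp_all add: algebra_simps)
  then show "quot_dim_eq n (Iideal n 0 a :: 'k mpoly set) ((a - 1) ^ (n - 1) * (a + n - 1))"
    using quot_dim_Iideal[of 0 n a] assms by simp
next
  let ?d = "(a-1)^(n-r) * (a-2)^r + (n-r) * ((a-1)^(n-r-1) * (a-2)^r) + r * ((a-1)^(n-r) * (a-2)^(r-1))"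
  \<comment> \<open>If r = 0, the truncated difference a - 2 only occurs to the power 0 or multiplied by r.\<close>
  have "int ?d = (\<Sum>i=0..r. (-1) ^ i * int (r choose i) * theta (n - i) (int a - 1))"
    unfolding alternating_binomial_sum_theta[OF assms(2)]
    using assms(3,4) by (cases "r = 0") (simp_all add: of_nat_diff)
  then show "\<exists>d. quot_dim_eq n (Iideal n r a :: 'k mpoly set) d \<and>
      int d = (\<Sum>i=0..r. (-1) ^ i * int (r choose i) * theta (n - i) (int a - 1))"
    using quot_dim_Iideal[of r n a] assms by blast
qed

end
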